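(* Let $\delta>0$ and $\nu\ge\frac32+\delta$, and let $K$ be the integral operator on $C_0^\infty(\mathbb R_+)$, $Ku(x)=\int_0^\infty k(x,y)u(y)\,dy$, with kernel \[ k(x,y)=\begin{cases}\frac1{2\nu}\left(\frac yx\right)^{\nu}(xy)^{1/2},&y\le x,\\ \frac1{2\nu}\left(\frac yx\right)^{-\nu}(xy)^{1/2},&x\le y.\end{cases} \] Then $X^{-2}\circ K$ defines a bounded operator on $L^2(0,\infty)$, and there is a constant $C>0$ depending only on $\delta$ such that \[ \|X^{-2}\circ K\|_{L^2\to L^2}\le\left(\nu^2-\tfrac94\right)^{-1},\quad\|(X\partial_x)\circ X^{-2}\circ K\|_{L^2\to L^2}\le\left(\nu-\tfrac32\right)^{-1},\quad\|(X\partial_x)^2\circ X^{-2}\circ K\|_{L^2\to L^2}\le C. \]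
   Context: $\mathbb R_+=(0,\infty)$ and $X$ denotes multiplication by $x$. *)

theory Defs
  imports "HOL-Analysis.Analysis"
begin

definition kern :: "real \<Rightarrow> real \<Rightarrow> real \<Rightarrow> real" where
  "kern \<nu> x y =
     (if y \<le> x then 1 / (2 * \<nu>) * (y / x) powr \<nu> * (x * y) powr (1/2)
      else 1 / (2 * \<nu>) * (y / x) powr (- \<nu>) * (x * y) powr (1/2))"

definition opK :: "real \<Rightarrow> (real \<Rightarrow> real) \<Rightarrow> real \<Rightarrow> real" where
  "opK \<nu> u x = (LINT y:{0<..}|lborel. kern \<nu> x y * u y)"

definition opT :: "real \<Rightarrow> (real \<Rightarrow> real) \<Rightarrow> real \<Rightarrow> real" where
  "opT \<nu> u x = inverse (x ^ 2) * opK \<nu> u x"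

definition euler :: "(real \<Rightarrow> real) \<Rightarrow> real \<Rightarrow> real" where
  "euler f x = x * deriv f x"

definition L2sq :: "(real \<Rightarrow> real) \<Rightarrow> ennreal" where
  "L2sq f = (\<integral>\<^sup>+ x\<in>{0<..}. ennreal ((f x)\<^sup>2) \<partial>lborel)"

definition test_fun :: "(real \<Rightarrow> real) \<Rightarrow> bool" where
  "test_fun u \<longleftrightarrow>
     (\<forall>n. \<forall>x>0. (deriv ^^ n) u differentiable at x) \<and>
     (\<exists>a b. 0 < a \<and> a \<le> b \<and> (\<forall>x. x \<notin> {a..b} \<longrightarrow> u x = 0))"

end

theory Submission
  imports Defs
begin

text \<open>
  For \<open>u\<close> supported in \<open>[a, b] \<subseteq> (0, \<infinity>)\<close> the kernel splits \<open>X\<^sup>-\<^sup>2 K u = (P + Q) / (2\<nu>)\<close> with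
  \<open>P x = x\<^bsup>-3/2-\<nu>\<^esup> \<integral>\<^sub>0\<^sup>x y\<^bsup>\<nu>+1/2\<^esup> u\<close> and \<open>Q x = x\<^bsup>\<nu>-3/2\<^esup> \<integral>\<^sub>x\<^sup>\<infinity> y\<^bsup>1/2-\<nu>\<^esup> u\<close>.
  These solve the Euler equations \<open>XP' = u - (\<nu>+3/2) P\<close> and \<open>XQ' = (\<nu>-3/2) Q - u\<close>, and
  integrating \<open>(x G\<^sup>2)'\<close> for a solution of \<open>XG' = v - l G\<close> gives the Hardy-type bound
  \<open>(l - 1/2)\<^sup>2 \<parallel>G\<parallel>\<^sup>2 \<le> \<parallel>v\<parallel>\<^sup>2\<close>, provided the boundary term has the right sign; it has, because
  \<open>P\<close> vanishes left of the support and \<open>Q\<close> right of it. Hence \<open>\<parallel>P\<parallel> \<le> \<parallel>u\<parallel>/(\<nu>+1)\<close>,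
  \<open>\<parallel>Q\<parallel> \<le> \<parallel>u\<parallel>/(\<nu>-1)\<close>, and the three operators are explicit combinations of \<open>P\<close>, \<open>Q\<close> and \<open>u\<close>.
  All estimates are first proved on windows \<open>[s, t] \<supseteq> [a, b]\<close> and then passed to
  \<open>L\<^sup>2(0, \<infinity>)\<close> by monotone convergence.
\<close>

lemma isCont_powr_mult_vanishing:
  fixes u :: "real \<Rightarrow> real"
  assumes "isCont u y" "0 < a" "\<And>z. z \<le> a \<Longrightarrow> u z = 0"
  shows "isCont (\<lambda>z. z powr c * u z) y"
proof (cases "0 < y")
  case True
  then show ?thesis by (intro continuous_intros assms(1)) auto
next
  case False
  have "eventually (\<lambda>z. z \<in> {..<a}) (nhds y)"
    using False assms(2) by (intro eventually_nhds_in_open) auto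
  then have "eventually (\<lambda>z. z powr c * u z = 0) (nhds y)"
    by eventually_elim (use assms(3) in auto)
  then show ?thesis
    using isCont_cong[of "\<lambda>z. z powr c * u z" "\<lambda>_. 0" y] by simp
qed

lemma integral_has_real_derivative_at:
  fixes g :: "real \<Rightarrow> real"
  assumes "continuous_on UNIV g" "0 < x"
  shows "((\<lambda>x. integral {0..x} g) has_real_derivative g x) (at x)"
proof -
  have "((\<lambda>x. integral {0..x} g) has_real_derivative g x) (at x within {0..x+1})"
    using assms by (intro integral_has_real_derivative continuous_on_subset[OF assms(1)]) auto
  then show ?thesis
    using assms(2) by (subst (asm) at_within_interior[of x]) auto
qed

lemma integral_atLeastAtMost_max_upper:
  fixes f :: "real \<Rightarrow> real"
  shows "integral {x..max x b} f = integral {x..b} f"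
  by (cases "x \<le> b") (simp_all add: max_def)

lemma euler_ode_energy_identity:
  fixes G v :: "real \<Rightarrow> real" and l s t :: real
  assumes st: "0 < s" "s \<le> t"
    and G_deriv: "\<And>x. x \<in> {s..t} \<Longrightarrow> (G has_real_derivative (v x - l * G x) / x) (at x)"
    and v_cont: "continuous_on {s..t} v"
  shows "2 * integral {s..t} (\<lambda>x. G x * v x) - 2 * (l - 1/2) * integral {s..t} (\<lambda>x. (G x)\<^sup>2)
         = t * (G t)\<^sup>2 - s * (G s)\<^sup>2"
proof -
  have G_cont: "continuous_on {s..t} G"
    by (rule continuous_at_imp_continuous_on) (use G_deriv DERIV_isCont in blast)
  have "((\<lambda>x. x * (G x)\<^sup>2) has_real_derivative 2 * (G x * v x) - 2 * (l - 1/2) * (G x)\<^sup>2) (at x)"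
    if x: "x \<in> {s..t}" for x
  proof -
    have "((\<lambda>x. x * (G x)\<^sup>2) has_real_derivative
            x * (2 * ((v x - l * G x) / x * G x)) + 1 * (G x)\<^sup>2) (at x)"
      using DERIV_mult'[OF DERIV_ident DERIV_power[OF G_deriv[OF x], of 2]] by simp
    moreover have "x * (2 * ((v x - l * G x) / x * G x)) + 1 * (G x)\<^sup>2
                   = 2 * (G x * v x) - 2 * (l - 1/2) * (G x)\<^sup>2"
      using x st by (simp add: field_simps power2_eq_square)
    ultimately show ?thesis by simp
  qed
  then have ftc: "((\<lambda>x. 2 * (G x * v x) - 2 * (l - 1/2) * (G x)\<^sup>2) has_integral
               t * (G t)\<^sup>2 - s * (G s)\<^sup>2) {s..t}"
    by (intro fundamental_theorem_of_calculus[OF st(2)])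
       (auto simp: has_real_derivative_iff_has_vector_derivative intro: has_vector_derivative_at_within)
  have split: "integral {s..t} (\<lambda>x. 2 * (G x * v x) - 2 * (l - 1/2) * (G x)\<^sup>2)
      = 2 * integral {s..t} (\<lambda>x. G x * v x) - 2 * (l - 1/2) * integral {s..t} (\<lambda>x. (G x)\<^sup>2)"
    by (subst integral_diff) (auto intro!: integrable_continuous_interval continuous_intros G_cont v_cont)
  show ?thesis
    unfolding split[symmetric] by (rule integral_unique[OF ftc])
qed

lemma hardy_inequality_interval:
  fixes G v :: "real \<Rightarrow> real" and l s t :: real
  assumes st: "0 < s" "s \<le> t"
    and G_deriv: "\<And>x. x \<in> {s..t} \<Longrightarrow> (G has_real_derivative (v x - l * G x) / x) (at x)"
    and v_cont: "continuous_on {s..t} v"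
    and boundary: "0 \<le> (l - 1/2) * (t * (G t)\<^sup>2 - s * (G s)\<^sup>2)"
  shows "(l - 1/2)\<^sup>2 * integral {s..t} (\<lambda>x. (G x)\<^sup>2) \<le> integral {s..t} (\<lambda>x. (v x)\<^sup>2)"
proof -
  define m where "m = l - 1/2"
  define IG IGv Iv where "IG = integral {s..t} (\<lambda>x. (G x)\<^sup>2)"
    and "IGv = integral {s..t} (\<lambda>x. G x * v x)" and "Iv = integral {s..t} (\<lambda>x. (v x)\<^sup>2)"
  have G_cont: "continuous_on {s..t} G"
    by (rule continuous_at_imp_continuous_on) (use G_deriv DERIV_isCont in blast)
  have "integral {s..t} (\<lambda>x. 2 * m * (G x * v x)) \<le> integral {s..t} (\<lambda>x. m\<^sup>2 * (G x)\<^sup>2 + (v x)\<^sup>2)"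
  proof (rule integral_le)
    fix x
    have "0 \<le> (m * G x - v x)\<^sup>2" by simp
    then show "2 * m * (G x * v x) \<le> m\<^sup>2 * (G x)\<^sup>2 + (v x)\<^sup>2"
      by (simp add: power2_eq_square algebra_simps)
  qed (auto intro!: integrable_continuous_interval continuous_intros G_cont v_cont)
  then have "2 * m * IGv \<le> m\<^sup>2 * IG + Iv"
    unfolding IGv_def IG_def Iv_def
    by (subst (asm) integral_add) (auto intro!: integrable_continuous_interval continuous_intros G_cont v_cont)
  moreover have "0 \<le> m * (2 * IGv - 2 * m * IG)"
    using boundary euler_ode_energy_identity[OF st G_deriv v_cont] by (simp add: m_def IG_def IGv_def)
  then have "2 * m\<^sup>2 * IG \<le> 2 * m * IGv"
    by (simp add: power2_eq_square algebra_simps)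
  ultimately show ?thesis
    by (simp add: m_def IG_def Iv_def)
qed

lemma le_inverse_square_mult:
  fixes c x y :: real
  assumes "c\<^sup>2 * x \<le> y" "c \<noteq> 0"
  shows "x \<le> (inverse c)\<^sup>2 * y"
proof -
  have "x = (inverse c)\<^sup>2 * (c\<^sup>2 * x)"
    using assms(2) by (simp add: power_inverse)
  also have "\<dots> \<le> (inverse c)\<^sup>2 * y"
    using assms(1) by (rule mult_left_mono) simp
  finally show ?thesis .
qed

lemma square_add_le_weighted:
  fixes x y r :: real
  assumes "0 < r"
  shows "(x + y)\<^sup>2 \<le> (1 + r) * x\<^sup>2 + (1 + 1/r) * y\<^sup>2"
proof -
  have "0 \<le> (r * x - y)\<^sup>2 / r" using assms by simp
  also have "\<dots> = r * x\<^sup>2 - 2 * x * y + y\<^sup>2 / r"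
    using assms by (simp add: power2_eq_square field_simps)
  finally show ?thesis using assms by (simp add: power2_eq_square field_simps)
qed

text \<open>The triangle inequality in \<open>L\<^sup>2(s, t)\<close>, phrased through bounds relative to a common \<open>U\<close>.\<close>

lemma integral_square_lincomb_le:
  fixes f g :: "real \<Rightarrow> real"
  assumes f_cont: "continuous_on {s..t} f" and g_cont: "continuous_on {s..t} g"
    and "\<alpha> \<noteq> 0" "\<beta> \<noteq> 0" "0 < p" "0 < q" "0 \<le> U"
    and f_bound: "integral {s..t} (\<lambda>x. (f x)\<^sup>2) \<le> p\<^sup>2 * U"
    and g_bound: "integral {s..t} (\<lambda>x. (g x)\<^sup>2) \<le> q\<^sup>2 * U"
    and K: "\<bar>\<alpha>\<bar> * p + \<bar>\<beta>\<bar> * q \<le> K"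
  shows "integral {s..t} (\<lambda>x. (\<alpha> * f x + \<beta> * g x)\<^sup>2) \<le> K\<^sup>2 * U"
proof -
  define p' q' where "p' = \<bar>\<alpha>\<bar> * p" and "q' = \<bar>\<beta>\<bar> * q"
  have pq: "0 < p'" "0 < q'" using assms by (auto simp: p'_def q'_def)
  define r where "r = q' / p'"
  have r: "0 < r" using pq by (simp add: r_def)
  have int: "h integrable_on {s..t}" if "continuous_on {s..t} h" for h :: "real \<Rightarrow> real"
    using that by (rule integrable_continuous_interval)
  have "integral {s..t} (\<lambda>x. (\<alpha> * f x + \<beta> * g x)\<^sup>2)
        \<le> integral {s..t} (\<lambda>x. (1 + r) * \<alpha>\<^sup>2 * (f x)\<^sup>2 + (1 + 1/r) * \<beta>\<^sup>2 * (g x)\<^sup>2)"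
  proof (rule integral_le)
    fix x
    show "(\<alpha> * f x + \<beta> * g x)\<^sup>2 \<le> (1 + r) * \<alpha>\<^sup>2 * (f x)\<^sup>2 + (1 + 1/r) * \<beta>\<^sup>2 * (g x)\<^sup>2"
      using square_add_le_weighted[OF r, of "\<alpha> * f x" "\<beta> * g x"]
      by (simp add: power_mult_distrib mult.assoc)
  qed (auto intro!: int continuous_intros f_cont g_cont)
  also have "\<dots> = (1 + r) * \<alpha>\<^sup>2 * integral {s..t} (\<lambda>x. (f x)\<^sup>2)
                 + (1 + 1/r) * \<beta>\<^sup>2 * integral {s..t} (\<lambda>x. (g x)\<^sup>2)"
    by (subst integral_add) (auto intro!: int continuous_intros f_cont g_cont)
  also have "\<dots> \<le> (1 + r) * \<alpha>\<^sup>2 * (p\<^sup>2 * U) + (1 + 1/r) * \<beta>\<^sup>2 * (q\<^sup>2 * U)"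
    using r f_bound g_bound by (intro add_mono mult_left_mono) auto
  also have "\<dots> = (1 + r) * p'\<^sup>2 * U + (1 + 1/r) * q'\<^sup>2 * U"
    by (simp add: p'_def q'_def power_mult_distrib)
  also have "\<dots> = (p' + q')\<^sup>2 * U"
    using pq by (simp add: r_def power2_eq_square field_simps)
  also have "\<dots> \<le> K\<^sup>2 * U"
    using pq K \<open>0 \<le> U\<close> by (intro mult_right_mono power_mono) (auto simp: p'_def q'_def)
  finally show ?thesis .
qed

lemma L2sq_cong: "(\<And>x. 0 < x \<Longrightarrow> f x = g x) \<Longrightarrow> L2sq f = L2sq g"
  unfolding L2sq_def by (rule nn_integral_cong) (auto simp: indicator_def)

lemma ennreal_integral_square_eq_nn_integral:
  fixes f :: "real \<Rightarrow> real"
  assumes "continuous_on {s..t} f"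
  shows "ennreal (integral {s..t} (\<lambda>x. (f x)\<^sup>2))
         = (\<integral>\<^sup>+ x. ennreal ((f x)\<^sup>2) * indicator {s..t} x \<partial>lborel)"
proof -
  have I: "((\<lambda>x. (f x)\<^sup>2) has_integral integral {s..t} (\<lambda>x. (f x)\<^sup>2)) {s..t}"
    by (intro integrable_integral integrable_continuous_interval continuous_intros assms)
  show ?thesis
    by (rule nn_integral_has_integral_lebesgue'[OF _ I, symmetric]) simp
qed

lemma ennreal_integral_square_le_L2sq:
  fixes f :: "real \<Rightarrow> real"
  assumes "continuous_on {s..t} f" "0 < s"
  shows "ennreal (integral {s..t} (\<lambda>x. (f x)\<^sup>2)) \<le> L2sq f"
  unfolding ennreal_integral_square_eq_nn_integral[OF assms(1)] L2sq_def
  by (rule nn_integral_mono) (use assms(2) in \<open>auto simp: indicator_def\<close>)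

lemma L2sq_eq_SUP_windows:
  fixes F :: "real \<Rightarrow> real"
  assumes F_cont: "continuous_on {0<..} F" and "0 < a"
  shows "L2sq F = (SUP n. ennreal (integral {min (inverse (real (Suc n))) a .. max (real (Suc n)) b}
                                     (\<lambda>x. (F x)\<^sup>2)))"
proof -
  define W where "W n = {min (inverse (real (Suc n))) a .. max (real (Suc n)) b}" for n
  define f where "f n x = ennreal ((F x)\<^sup>2) * indicator (W n) x" for n x
  have W_pos: "0 < min (inverse (real (Suc n))) a" for n
    using \<open>0 < a\<close> by simp
  have W_sub: "W n \<subseteq> {0<..}" for n
    unfolding W_def using W_pos[of n] by (metis atLeastAtMost_iff greaterThan_iff less_le_trans subsetI)
  have "incseq f"
  proof (intro incseq_SucI le_funI)
    fix n x
    have "inverse (real (Suc (Suc n))) \<le> inverse (real (Suc n))"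
      by (intro le_imp_inverse_le) auto
    then have "W n \<subseteq> W (Suc n)"
      unfolding W_def atLeastatMost_subset_iff by (intro disjI2 conjI min.mono max.mono) auto
    then show "f n x \<le> f (Suc n) x" by (auto simp: f_def indicator_def)
  qed
  moreover have "f n \<in> borel_measurable lborel" for n
  proof -
    have "(\<lambda>x. indicator (W n) x *\<^sub>R (F x)\<^sup>2) \<in> borel_measurable borel"
      by (intro borel_measurable_continuous_on_indicator continuous_intros
          continuous_on_subset[OF F_cont W_sub]) (simp add: W_def)
    then have "(\<lambda>x. ennreal (indicator (W n) x *\<^sub>R (F x)\<^sup>2)) \<in> borel_measurable borel"
      by measurable
    moreover have "f n = (\<lambda>x. ennreal (indicator (W n) x *\<^sub>R (F x)\<^sup>2))"
      by (auto simp: f_def indicator_def fun_eq_iff)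
    ultimately show ?thesis by simp
  qed
  moreover have "(SUP n. f n x) = ennreal ((F x)\<^sup>2) * indicator {0<..} x" for x
  proof (rule antisym)
    show "(SUP n. f n x) \<le> ennreal ((F x)\<^sup>2) * indicator {0<..} x"
      by (rule SUP_least) (use W_sub in \<open>auto simp: f_def indicator_def\<close>)
  next
    show "ennreal ((F x)\<^sup>2) * indicator {0<..} x \<le> (SUP n. f n x)"
    proof (cases "0 < x")
      case True
      obtain n :: nat where n: "inverse x < real n" "x < real n"
        using reals_Archimedean2[of "max x (inverse x)"] by auto
      have "inverse (real (Suc n)) < inverse (inverse x)"
        using True n by (intro less_imp_inverse_less) auto
      then have "x \<in> W n" using True n by (auto simp: W_def)
      then have "ennreal ((F x)\<^sup>2) * indicator {0<..} x = f n x"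
        using True by (simp add: f_def indicator_def)
      then show ?thesis by (metis SUP_upper UNIV_I)
    qed simp
  qed
  ultimately have L2sq_SUP: "L2sq F = (SUP n. integral\<^sup>N lborel (f n))"
    unfolding L2sq_def by (simp add: nn_integral_monotone_convergence_SUP[symmetric])
  have f_integral: "integral\<^sup>N lborel (f n) = ennreal (integral (W n) (\<lambda>x. (F x)\<^sup>2))" for n
    unfolding f_def W_def
    by (rule ennreal_integral_square_eq_nn_integral[symmetric])
       (rule continuous_on_subset[OF F_cont W_sub[unfolded W_def]])
  show ?thesis
    unfolding L2sq_SUP f_integral W_def ..
qed

lemma L2sq_le_of_window_bounds:
  fixes F u :: "real \<Rightarrow> real"
  assumes F_cont: "continuous_on {0<..} F" and u_cont: "continuous_on {0<..} u"
    and "0 < a" "0 \<le> K"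
    and window: "\<And>s t. 0 < s \<Longrightarrow> s \<le> a \<Longrightarrow> b \<le> t \<Longrightarrow>
                   integral {s..t} (\<lambda>x. (F x)\<^sup>2) \<le> K * integral {s..t} (\<lambda>x. (u x)\<^sup>2)"
  shows "L2sq F \<le> ennreal K * L2sq u"
  unfolding L2sq_eq_SUP_windows[OF F_cont \<open>0 < a\<close>, of b]
proof (rule SUP_least)
  fix n
  define s t where "s = min (inverse (real (Suc n))) a" and "t = max (real (Suc n)) b"
  have s: "0 < s" "s \<le> a" "b \<le> t" using \<open>0 < a\<close> by (auto simp: s_def t_def)
  have u_cont': "continuous_on {s..t} u"
    using s by (intro continuous_on_subset[OF u_cont]) auto
  have "ennreal (integral {s..t} (\<lambda>x. (F x)\<^sup>2)) \<le> ennreal (K * integral {s..t} (\<lambda>x. (u x)\<^sup>2))"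
    using s by (intro ennreal_leI window)
  also have "\<dots> = ennreal K * ennreal (integral {s..t} (\<lambda>x. (u x)\<^sup>2))"
    using \<open>0 \<le> K\<close>
    by (intro ennreal_mult integral_nonneg integrable_continuous_interval continuous_intros u_cont') auto
  also have "\<dots> \<le> ennreal K * L2sq u"
    using s by (intro mult_left_mono ennreal_integral_square_le_L2sq u_cont') auto
  finally show "ennreal (integral {s..t} (\<lambda>x. (F x)\<^sup>2)) \<le> ennreal K * L2sq u" .
qed

locale kernel_setting =
  fixes \<nu> :: real and u :: "real \<Rightarrow> real" and a b :: real
  assumes nu_gt: "3/2 < \<nu>" and u_isCont: "\<And>x. isCont u x"
    and a_pos: "0 < a" and a_less_b: "a < b"
    and u_vanishes: "\<And>y. y \<le> a \<or> b \<le> y \<Longrightarrow> u y = 0"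
begin

definition wP :: "real \<Rightarrow> real" where "wP y = y powr (\<nu> + 1/2) * u y"
definition wQ :: "real \<Rightarrow> real" where "wQ y = y powr (1/2 - \<nu>) * u y"
definition P :: "real \<Rightarrow> real" where "P x = x powr (-3/2 - \<nu>) * integral {0..x} wP"
definition Q :: "real \<Rightarrow> real" where "Q x = x powr (\<nu> - 3/2) * integral {x..b} wQ"

text \<open>\<open>F0\<close>, \<open>F1\<close>, \<open>F2\<close> are \<open>X\<^sup>-\<^sup>2 K u\<close> and its images under \<open>X\<partial>\<^sub>x\<close> and \<open>(X\<partial>\<^sub>x)\<^sup>2\<close> on \<open>(0, \<infinity>)\<close>.\<close>

definition F0 :: "real \<Rightarrow> real" where "F0 x = (P x + Q x) / (2 * \<nu>)"
definition F1 :: "real \<Rightarrow> real" where "F1 x = (- (\<nu> + 3/2) * P x + (\<nu> - 3/2) * Q x) / (2 * \<nu>)"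
definition F2 :: "real \<Rightarrow> real" where "F2 x = (\<nu>\<^sup>2 - 9/4) * F0 x - 3 * F1 x - u x"

lemma nu_pos: "0 < \<nu>"
  using nu_gt by simp

lemma nu_sq_gt: "9/4 < \<nu>\<^sup>2"
proof -
  have "(3/2)\<^sup>2 < \<nu>\<^sup>2" using nu_gt by (intro power_strict_mono) auto
  then show ?thesis by (simp add: power2_eq_square)
qed

lemma u_continuous_on: "continuous_on S u"
  by (simp add: continuous_at_imp_continuous_on u_isCont)

lemma wP_continuous_on: "continuous_on UNIV wP"
  unfolding wP_def[abs_def] using u_isCont a_pos u_vanishes
  by (intro continuous_at_imp_continuous_on ballI isCont_powr_mult_vanishing) auto

lemma wQ_continuous_on: "continuous_on UNIV wQ"
  unfolding wQ_def[abs_def] using u_isCont a_pos u_vanishes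
  by (intro continuous_at_imp_continuous_on ballI isCont_powr_mult_vanishing) auto

lemma P_vanishes: "x \<le> a \<Longrightarrow> P x = 0"
  using integral_cong[of "{0..x}" wP "\<lambda>_. 0"] u_vanishes by (simp add: P_def wP_def)

lemma Q_vanishes: "b \<le> x \<Longrightarrow> Q x = 0"
  by (cases "x = b") (simp_all add: Q_def)

lemma integral_wQ_eq: "0 \<le> x \<Longrightarrow> integral {x..b} wQ = integral {0..b} wQ - integral {0..x} wQ"
proof -
  assume x: "0 \<le> x"
  have int: "wQ integrable_on {s..t}" for s t
    by (rule integrable_continuous_interval) (rule continuous_on_subset[OF wQ_continuous_on], simp)
  show ?thesis
  proof (cases "x \<le> b")
    case True
    then show ?thesis
      using Henstock_Kurzweil_Integration.integral_combine[OF x True int] by simp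
  next
    case False
    have "integral {b..x} wQ = 0"
      using integral_cong[of "{b..x}" wQ "\<lambda>_. 0"] u_vanishes by (simp add: wQ_def)
    then show ?thesis
      using False a_pos a_less_b Henstock_Kurzweil_Integration.integral_combine[of 0 b x wQ] int
      by simp
  qed
qed

lemma P_has_derivative:
  assumes x: "0 < x"
  shows "(P has_real_derivative (u x - (\<nu> + 3/2) * P x) / x) (at x)"
proof -
  have "(P has_real_derivative x powr (-3/2 - \<nu>) * wP x
          + (-3/2 - \<nu>) * x powr (-3/2 - \<nu> - 1) * integral {0..x} wP) (at x)"
    unfolding P_def[abs_def] using x
    by (intro DERIV_mult' has_real_derivative_powr integral_has_real_derivative_at wP_continuous_on) auto
  moreover have "x powr (-3/2 - \<nu>) * wP x = u x / x"
  proof -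
    have "x powr (-3/2 - \<nu>) * wP x = x powr ((-3/2 - \<nu>) + (\<nu> + 1/2)) * u x"
      by (simp only: wP_def mult.assoc[symmetric] powr_add[symmetric])
    then show ?thesis using x by (simp add: powr_neg_one)
  qed
  moreover have "x powr (-3/2 - \<nu> - 1) = x powr (-3/2 - \<nu>) / x"
    using x powr_diff[of x "-3/2 - \<nu>" 1] by simp
  moreover have "u x / x + (-3/2 - \<nu>) * (c / x) * I = (u x - (\<nu> + 3/2) * (c * I)) / x" for c I
    using x by (simp add: field_simps)
  ultimately show ?thesis
    by (simp only: P_def)
qed

lemma Q_has_derivative:
  assumes x: "0 < x"
  shows "(Q has_real_derivative (- u x - (3/2 - \<nu>) * Q x) / x) (at x)"
proof -
  have B: "((\<lambda>x. integral {x..b} wQ) has_real_derivative - wQ x) (at x)"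
  proof (rule has_field_derivative_transform_within_open[where S = "{0<..}"])
    show "((\<lambda>x. integral {0..b} wQ - integral {0..x} wQ) has_real_derivative - wQ x) (at x)"
      using DERIV_diff[OF DERIV_const integral_has_real_derivative_at[OF wQ_continuous_on x]] by simp
  qed (use x in \<open>auto simp: integral_wQ_eq[symmetric]\<close>)
  have "(Q has_real_derivative x powr (\<nu> - 3/2) * - wQ x
          + (\<nu> - 3/2) * x powr (\<nu> - 3/2 - 1) * integral {x..b} wQ) (at x)"
    unfolding Q_def[abs_def] using x by (intro DERIV_mult' has_real_derivative_powr B) auto
  moreover have "x powr (\<nu> - 3/2) * wQ x = u x / x"
  proof -
    have "x powr (\<nu> - 3/2) * wQ x = x powr ((\<nu> - 3/2) + (1/2 - \<nu>)) * u x"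
      by (simp only: wQ_def mult.assoc[symmetric] powr_add[symmetric])
    then show ?thesis using x by (simp add: powr_neg_one)
  qed
  moreover have "x powr (\<nu> - 3/2 - 1) = x powr (\<nu> - 3/2) / x"
    using x powr_diff[of x "\<nu> - 3/2" 1] by simp
  moreover have "c * - w + (\<nu> - 3/2) * (c / x) * I = (- u x - (3/2 - \<nu>) * (c * I)) / x"
    if "c * w = u x / x" for c w I
    using x that by (simp add: field_simps)
  ultimately show ?thesis
    by (simp only: Q_def)
qed

lemma P_continuous_on: "continuous_on {0<..} P"
  by (intro continuous_at_imp_continuous_on ballI DERIV_isCont[OF P_has_derivative]) simp

lemma Q_continuous_on: "continuous_on {0<..} Q"
  by (intro continuous_at_imp_continuous_on ballI DERIV_isCont[OF Q_has_derivative]) simp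

lemma P_window:
  assumes "0 < s" "s \<le> a" "b \<le> t"
  shows "integral {s..t} (\<lambda>x. (P x)\<^sup>2) \<le> (inverse (\<nu> + 1))\<^sup>2 * integral {s..t} (\<lambda>x. (u x)\<^sup>2)"
proof (rule le_inverse_square_mult)
  have "((\<nu> + 3/2) - 1/2)\<^sup>2 * integral {s..t} (\<lambda>x. (P x)\<^sup>2) \<le> integral {s..t} (\<lambda>x. (u x)\<^sup>2)"
  proof (rule hardy_inequality_interval)
    have "0 \<le> t * (P t)\<^sup>2" using assms a_pos a_less_b by simp
    then show "0 \<le> ((\<nu> + 3/2) - 1/2) * (t * (P t)\<^sup>2 - s * (P s)\<^sup>2)"
      using assms nu_gt by (simp add: P_vanishes)
  qed (use assms a_less_b in \<open>auto intro: P_has_derivative u_continuous_on\<close>)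
  then show "(\<nu> + 1)\<^sup>2 * integral {s..t} (\<lambda>x. (P x)\<^sup>2) \<le> integral {s..t} (\<lambda>x. (u x)\<^sup>2)"
    by (simp add: add.commute)
qed (use nu_gt in simp)

lemma Q_window:
  assumes "0 < s" "s \<le> a" "b \<le> t"
  shows "integral {s..t} (\<lambda>x. (Q x)\<^sup>2) \<le> (inverse (\<nu> - 1))\<^sup>2 * integral {s..t} (\<lambda>x. (u x)\<^sup>2)"
proof (rule le_inverse_square_mult)
  have "((3/2 - \<nu>) - 1/2)\<^sup>2 * integral {s..t} (\<lambda>x. (Q x)\<^sup>2) \<le> integral {s..t} (\<lambda>x. (- u x)\<^sup>2)"
  proof (rule hardy_inequality_interval)
    show "0 \<le> ((3/2 - \<nu>) - 1/2) * (t * (Q t)\<^sup>2 - s * (Q s)\<^sup>2)"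
      using assms nu_gt by (simp add: Q_vanishes mult_le_0_iff)
  qed (use assms a_less_b in \<open>auto intro: Q_has_derivative continuous_intros u_continuous_on\<close>)
  moreover have "((3/2 - \<nu>) - 1/2)\<^sup>2 = (\<nu> - 1)\<^sup>2"
    by (simp add: power2_eq_square algebra_simps)
  ultimately show "(\<nu> - 1)\<^sup>2 * integral {s..t} (\<lambda>x. (Q x)\<^sup>2) \<le> integral {s..t} (\<lambda>x. (u x)\<^sup>2)"
    by simp
qed (use nu_gt in simp)

lemma kern_mult_eq:
  assumes x: "0 < x" and y: "0 < y"
  shows "kern \<nu> x y * u y =
           (if y \<le> x then x powr (1/2 - \<nu>) / (2 * \<nu>) * wP y else x powr (1/2 + \<nu>) / (2 * \<nu>) * wQ y)"
proof (cases "y \<le> x")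
  case True
  have k: "kern \<nu> x y = 1 / (2 * \<nu>) * (y powr \<nu> / x powr \<nu>) * (x powr (1/2) * y powr (1/2))"
    using True unfolding kern_def powr_divide powr_mult by simp
  have "0 < x powr \<nu>" using x by simp
  have e: "x powr (1/2 - \<nu>) = x powr (1/2) / x powr \<nu>" "y powr (\<nu> + 1/2) = y powr \<nu> * y powr (1/2)"
    by (simp_all only: powr_diff powr_add)
  show ?thesis
    unfolding k wP_def e using True nu_pos \<open>0 < x powr \<nu>\<close> by (simp add: field_simps)
next
  case False
  have k: "kern \<nu> x y = 1 / (2 * \<nu>) * (x powr \<nu> / y powr \<nu>) * (x powr (1/2) * y powr (1/2))"
    using False unfolding kern_def powr_minus powr_divide powr_mult by simp
  have "0 < y powr \<nu>" using y by simp
  have e: "y powr (1/2 - \<nu>) = y powr (1/2) / y powr \<nu>" "x powr (1/2 + \<nu>) = x powr (1/2) * x powr \<nu>"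
    by (simp_all only: powr_diff powr_add)
  show ?thesis
    unfolding k wQ_def e using False nu_pos \<open>0 < y powr \<nu>\<close> by (simp add: field_simps)
qed

lemma opT_eq_F0:
  assumes x: "0 < x"
  shows "opT \<nu> u x = F0 x"
proof -
  define d where "d = max x b"
  define c1 c2 where "c1 = x powr (1/2 - \<nu>) / (2 * \<nu>)" and "c2 = x powr (1/2 + \<nu>) / (2 * \<nu>)"
  define H where "H y = (if y \<le> x then c1 * wP y else c2 * wQ y)" for y
  have d: "x \<le> d" "b \<le> d" by (auto simp: d_def)
  have c_eq: "c1 * wP x = c2 * wQ x"
    unfolding c1_def c2_def wP_def wQ_def using x by (simp add: powr_add[symmetric] field_simps)
  have H_cont: "continuous_on S H" for S
    unfolding H_def[abs_def]
    by (rule continuous_on_cases_le)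
       (auto intro!: continuous_intros continuous_on_subset[OF wP_continuous_on]
         continuous_on_subset[OF wQ_continuous_on] simp: c_eq)
  have "indicator {0<..} y *\<^sub>R (kern \<nu> x y * u y) = indicator {0..d} y *\<^sub>R H y" for y
    using kern_mult_eq[OF x, of y] u_vanishes[of y] d x
    by (cases "0 < y") (auto simp: indicator_def H_def c1_def c2_def wP_def)
  then have "opK \<nu> u x = (LINT y:{0..d}|lborel. H y)"
    unfolding opK_def set_lebesgue_integral_def by simp
  also have "\<dots> = integral {0..x} H + integral {x..d} H"
    using d x H_cont
    by (simp add: set_borel_integral_eq_integral(2)[OF borel_integrable_atLeastAtMost'[OF H_cont]]
        Henstock_Kurzweil_Integration.integral_combine integrable_continuous_interval)
  also have "integral {0..x} H = c1 * integral {0..x} wP"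
    by (subst integral_cong[of _ _ "\<lambda>y. c1 * wP y"]) (auto simp: H_def)
  also have "integral {x..d} H = c2 * integral {x..d} wQ"
    by (subst integral_cong[of _ _ "\<lambda>y. c2 * wQ y"]) (auto simp: H_def c_eq)
  also have "integral {x..d} wQ = integral {x..b} wQ"
    unfolding d_def by (rule integral_atLeastAtMost_max_upper)
  finally have "opK \<nu> u x = c1 * integral {0..x} wP + c2 * integral {x..b} wQ" .
  moreover have "x powr (1/2 - \<nu>) = x powr (-3/2 - \<nu>) * x\<^sup>2"
    using x powr_add[of x "-3/2 - \<nu>" 2] by simp
  moreover have "x powr (1/2 + \<nu>) = x powr (\<nu> - 3/2) * x\<^sup>2"
    using x powr_add[of x "\<nu> - 3/2" 2] by simp
  ultimately show ?thesis
    using x nu_pos by (simp add: opT_def F0_def P_def Q_def c1_def c2_def field_simps)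
qed

lemma F0_has_derivative: "0 < x \<Longrightarrow> (F0 has_real_derivative F1 x / x) (at x)"
  unfolding F0_def[abs_def]
  by (rule DERIV_cong[OF DERIV_cdivide[OF DERIV_add[OF P_has_derivative Q_has_derivative]]])
     (use nu_pos in \<open>auto simp: F1_def field_simps\<close>)

lemma F1_has_derivative: "0 < x \<Longrightarrow> (F1 has_real_derivative F2 x / x) (at x)"
  unfolding F1_def[abs_def]
  by (rule DERIV_cong[OF DERIV_cdivide[OF DERIV_add[OF DERIV_cmult[OF P_has_derivative]
        DERIV_cmult[OF Q_has_derivative]]]])
     (use nu_pos in \<open>auto simp: F2_def F0_def F1_def field_simps power2_eq_square\<close>)

lemma F0_continuous_on: "continuous_on {0<..} F0"
  unfolding F0_def[abs_def] using nu_pos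
  by (intro continuous_intros P_continuous_on Q_continuous_on) auto

lemma F1_continuous_on: "continuous_on {0<..} F1"
  unfolding F1_def[abs_def] using nu_pos
  by (intro continuous_intros P_continuous_on Q_continuous_on) auto

lemma F2_continuous_on: "continuous_on {0<..} F2"
  unfolding F2_def[abs_def]
  by (intro continuous_intros F0_continuous_on F1_continuous_on u_continuous_on)

lemma F0_window:
  assumes "0 < s" "s \<le> a" "b \<le> t"
  shows "integral {s..t} (\<lambda>x. (F0 x)\<^sup>2) \<le> (inverse (\<nu>\<^sup>2 - 9/4))\<^sup>2 * integral {s..t} (\<lambda>x. (u x)\<^sup>2)"
proof -
  have sub: "{s..t} \<subseteq> {0<..}" using assms by auto
  have n: "0 < \<nu>" "0 < \<nu> - 1" "0 < \<nu> + 1" using nu_gt by auto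
  have "\<nu>\<^sup>2 - 1 = (\<nu> + 1) * (\<nu> - 1)"
    by (simp add: power2_eq_square algebra_simps)
  moreover have "\<bar>1 / (2 * \<nu>)\<bar> = 1 / (2 * \<nu>)"
    using n by simp
  ultimately have "\<bar>1 / (2 * \<nu>)\<bar> * inverse (\<nu> + 1) + \<bar>1 / (2 * \<nu>)\<bar> * inverse (\<nu> - 1)
                   = inverse (\<nu>\<^sup>2 - 1)"
    using n by (simp add: divide_simps)
  also have "\<dots> \<le> inverse (\<nu>\<^sup>2 - 9/4)"
    using nu_sq_gt by (intro le_imp_inverse_le) auto
  finally have K: "\<bar>1 / (2 * \<nu>)\<bar> * inverse (\<nu> + 1) + \<bar>1 / (2 * \<nu>)\<bar> * inverse (\<nu> - 1) \<le> inverse (\<nu>\<^sup>2 - 9/4)" .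
  have "F0 x = 1 / (2 * \<nu>) * P x + 1 / (2 * \<nu>) * Q x" for x
    by (simp add: F0_def add_divide_distrib)
  then show ?thesis
    using integral_square_lincomb_le[OF continuous_on_subset[OF P_continuous_on sub]
        continuous_on_subset[OF Q_continuous_on sub] _ _ _ _ _ P_window[OF assms] Q_window[OF assms] K]
      nu_gt
    by (simp add: integral_nonneg integrable_continuous_interval continuous_intros u_continuous_on)
qed

lemma F1_window:
  assumes "0 < s" "s \<le> a" "b \<le> t"
  shows "integral {s..t} (\<lambda>x. (F1 x)\<^sup>2) \<le> (inverse (\<nu> - 3/2))\<^sup>2 * integral {s..t} (\<lambda>x. (u x)\<^sup>2)"
proof -
  have sub: "{s..t} \<subseteq> {0<..}" using assms by auto
  have n: "0 < \<nu>" "0 < \<nu> - 1" "0 < \<nu> + 1" "0 < \<nu> - 3/2" using nu_gt by auto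
  have P_part: "\<bar>- (\<nu> + 3/2) / (2 * \<nu>)\<bar> * inverse (\<nu> + 1) \<le> 1 / (2 * (\<nu> - 3/2))"
  proof -
    have "(\<nu> + 3/2) * (2 * (\<nu> - 3/2)) - 1 * (2 * \<nu> * (\<nu> + 1)) \<le> 0"
      using n by (simp add: algebra_simps)
    then have "(\<nu> + 3/2) / (2 * \<nu> * (\<nu> + 1)) \<le> 1 / (2 * (\<nu> - 3/2))"
      using n by (subst frac_le_eq) (auto intro!: divide_nonpos_pos)
    then show ?thesis using n by (simp add: field_simps)
  qed
  have Q_part: "\<bar>(\<nu> - 3/2) / (2 * \<nu>)\<bar> * inverse (\<nu> - 1) \<le> 1 / (2 * (\<nu> - 3/2))"
  proof -
    have "(\<nu> - 3/2) * (2 * (\<nu> - 3/2)) - 1 * (2 * \<nu> * (\<nu> - 1)) \<le> 0"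
      using n by (simp add: algebra_simps)
    then have "(\<nu> - 3/2) / (2 * \<nu> * (\<nu> - 1)) \<le> 1 / (2 * (\<nu> - 3/2))"
      using n by (subst frac_le_eq) (auto intro!: divide_nonpos_pos)
    then show ?thesis using n by (simp add: field_simps)
  qed
  have K: "\<bar>- (\<nu> + 3/2) / (2 * \<nu>)\<bar> * inverse (\<nu> + 1) + \<bar>(\<nu> - 3/2) / (2 * \<nu>)\<bar> * inverse (\<nu> - 1)
           \<le> inverse (\<nu> - 3/2)"
  proof -
    have "1 / (2 * e) + 1 / (2 * e) = inverse e" for e :: real
      by (simp add: inverse_eq_divide)
    from this[of "\<nu> - 3/2"] show ?thesis using add_mono[OF P_part Q_part] by linarith
  qed
  have "F1 x = - (\<nu> + 3/2) / (2 * \<nu>) * P x + (\<nu> - 3/2) / (2 * \<nu>) * Q x" for x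
    by (simp add: F1_def add_divide_distrib)
  then show ?thesis
    using integral_square_lincomb_le[OF continuous_on_subset[OF P_continuous_on sub]
        continuous_on_subset[OF Q_continuous_on sub] _ _ _ _ _ P_window[OF assms] Q_window[OF assms] K]
      nu_gt
    by (simp add: integral_nonneg integrable_continuous_interval continuous_intros u_continuous_on)
qed

lemma F2_window:
  assumes "0 < s" "s \<le> a" "b \<le> t"
  shows "integral {s..t} (\<lambda>x. (F2 x)\<^sup>2) \<le> (2 + 3 / (\<nu> - 3/2))\<^sup>2 * integral {s..t} (\<lambda>x. (u x)\<^sup>2)"
proof -
  define c where "c = \<nu>\<^sup>2 - 9/4"
  define U where "U = integral {s..t} (\<lambda>x. (u x)\<^sup>2)"
  have c: "0 < c"
    using nu_sq_gt by (simp add: c_def)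
  have U: "0 \<le> U"
    unfolding U_def by (intro integral_nonneg integrable_continuous_interval continuous_intros u_continuous_on) auto
  have sub: "{s..t} \<subseteq> {0<..}" using assms by auto
  note F0_cont = continuous_on_subset[OF F0_continuous_on sub]
    and F1_cont = continuous_on_subset[OF F1_continuous_on sub]
  have "0 < \<nu> - 3/2"
    using nu_gt by simp
  then have pos: "0 < inverse c" "0 < inverse (\<nu> - 3/2)" "0 < 1 + 3 / (\<nu> - 3/2)"
    using c by (auto intro!: add_pos_pos divide_pos_pos)
  have K_G: "\<bar>c\<bar> * inverse c + \<bar>-3\<bar> * inverse e \<le> 1 + 3 / e" for e :: real
    using c by (simp add: divide_inverse)
  have G_bound: "integral {s..t} (\<lambda>x. (c * F0 x + (-3) * F1 x)\<^sup>2) \<le> (1 + 3 / (\<nu> - 3/2))\<^sup>2 * U"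
    by (rule integral_square_lincomb_le[OF F0_cont F1_cont _ _ pos(1,2) U
          F0_window[OF assms, folded c_def U_def] F1_window[OF assms, folded U_def] K_G[of "\<nu> - 3/2"]])
       (use c in auto)
  have G_cont: "continuous_on {s..t} (\<lambda>x. c * F0 x + (-3) * F1 x)"
    by (intro continuous_intros F0_cont F1_cont)
  have K_F2: "\<bar>1\<bar> * (1 + 3 / e) + \<bar>-1\<bar> * 1 \<le> 2 + 3 / e" for e :: real
    by simp
  have "integral {s..t} (\<lambda>x. (1 * (c * F0 x + (-3) * F1 x) + (-1) * u x)\<^sup>2)
        \<le> (2 + 3 / (\<nu> - 3/2))\<^sup>2 * U"
    by (rule integral_square_lincomb_le[OF G_cont u_continuous_on _ _ pos(3) zero_less_one U G_bound
          _ K_F2[of "\<nu> - 3/2"]]) (simp_all add: U_def)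
  then show ?thesis
    by (simp add: F2_def c_def U_def)
qed

lemma opT_has_derivative: "0 < x \<Longrightarrow> (opT \<nu> u has_real_derivative F1 x / x) (at x)"
  by (rule has_field_derivative_transform_within_open[OF F0_has_derivative, of _ "{0<..}"])
     (auto simp: opT_eq_F0)

lemma euler_opT_eq_F1: "0 < x \<Longrightarrow> euler (opT \<nu> u) x = F1 x"
  unfolding euler_def using DERIV_imp_deriv[OF opT_has_derivative] by simp

lemma euler_opT_has_derivative: "0 < x \<Longrightarrow> (euler (opT \<nu> u) has_real_derivative F2 x / x) (at x)"
  by (rule has_field_derivative_transform_within_open[OF F1_has_derivative, of _ "{0<..}"])
     (auto simp: euler_opT_eq_F1)

lemma euler_euler_opT_eq_F2: "0 < x \<Longrightarrow> euler (euler (opT \<nu> u)) x = F2 x"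
  unfolding euler_def[of "euler (opT \<nu> u)"] using DERIV_imp_deriv[OF euler_opT_has_derivative] by simp

lemma opT_estimates:
  shows "(\<forall>x>0. opT \<nu> u differentiable at x \<and> euler (opT \<nu> u) differentiable at x)"
    and "L2sq (opT \<nu> u) \<le> ennreal ((inverse (\<nu>\<^sup>2 - 9/4))\<^sup>2) * L2sq u"
    and "L2sq (euler (opT \<nu> u)) \<le> ennreal ((inverse (\<nu> - 3/2))\<^sup>2) * L2sq u"
    and "L2sq (euler (euler (opT \<nu> u))) \<le> ennreal ((2 + 3 / (\<nu> - 3/2))\<^sup>2) * L2sq u"
proof -
  note windows = L2sq_le_of_window_bounds[OF _ u_continuous_on a_pos]
  show "\<forall>x>0. opT \<nu> u differentiable at x \<and> euler (opT \<nu> u) differentiable at x"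
    using opT_has_derivative euler_opT_has_derivative by (auto simp: real_differentiable_def)
  show "L2sq (opT \<nu> u) \<le> ennreal ((inverse (\<nu>\<^sup>2 - 9/4))\<^sup>2) * L2sq u"
    using windows[OF F0_continuous_on _ F0_window] L2sq_cong[of "opT \<nu> u" F0] opT_eq_F0 by simp
  show "L2sq (euler (opT \<nu> u)) \<le> ennreal ((inverse (\<nu> - 3/2))\<^sup>2) * L2sq u"
    using windows[OF F1_continuous_on _ F1_window] L2sq_cong[of "euler (opT \<nu> u)" F1] euler_opT_eq_F1
    by simp
  show "L2sq (euler (euler (opT \<nu> u))) \<le> ennreal ((2 + 3 / (\<nu> - 3/2))\<^sup>2) * L2sq u"
    using windows[OF F2_continuous_on _ F2_window] L2sq_cong[of "euler (euler (opT \<nu> u))" F2]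
      euler_euler_opT_eq_F2
    by simp
qed

end

lemma test_fun_isCont:
  assumes "test_fun u"
  shows "isCont u x"
proof -
  obtain a b where diff: "\<And>x. 0 < x \<Longrightarrow> u differentiable at x"
    and supp: "0 < a" "\<And>x. x \<notin> {a..b} \<Longrightarrow> u x = 0"
    using assms unfolding test_fun_def by (metis funpow_0)
  show ?thesis
  proof (cases "0 < x")
    case True
    then show ?thesis using diff differentiable_imp_continuous_within by blast
  next
    case False
    have "eventually (\<lambda>z. z \<in> {..<a}) (nhds x)"
      using False supp(1) by (intro eventually_nhds_in_open) auto
    then have "eventually (\<lambda>z. u z = 0) (nhds x)"
      by eventually_elim (use supp(2) in auto)
    then show ?thesis
      using isCont_cong[of u "\<lambda>_. 0" x] by simp
  qed
qed

lemma test_fun_kernel_setting: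
  assumes "test_fun u" "3/2 < \<nu>"
  obtains a b where "kernel_setting \<nu> u a b"
proof -
  obtain a b where "0 < a" "a \<le> b" "\<And>x. x \<notin> {a..b} \<Longrightarrow> u x = 0"
    using assms(1) unfolding test_fun_def by blast
  then have "kernel_setting \<nu> u (a/2) (b+1)"
    using assms test_fun_isCont by unfold_locales auto
  then show ?thesis by (rule that)
qed

theorem proposition5p1:
  fixes \<delta> :: real
  assumes "\<delta> > 0"
  shows "\<exists>C>0. \<forall>\<nu>::real. \<forall>u. \<nu> \<ge> 3/2 + \<delta> \<and> test_fun u \<longrightarrow>
           (\<forall>x>0. opT \<nu> u differentiable at x \<and> euler (opT \<nu> u) differentiable at x) \<and>
           L2sq (opT \<nu> u) \<le> ennreal ((inverse (\<nu>\<^sup>2 - 9/4))\<^sup>2) * L2sq u \<and>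
           L2sq (euler (opT \<nu> u)) \<le> ennreal ((inverse (\<nu> - 3/2))\<^sup>2) * L2sq u \<and>
           L2sq (euler (euler (opT \<nu> u))) \<le> ennreal (C\<^sup>2) * L2sq u"
proof (rule exI[of _ "2 + 3 / \<delta>"], rule conjI[rotated], intro allI impI)
  fix \<nu> :: real and u
  assume "3/2 + \<delta> \<le> \<nu> \<and> test_fun u"
  then have \<nu>: "3/2 + \<delta> \<le> \<nu>" and u: "test_fun u" by auto
  then obtain a b where ks: "kernel_setting \<nu> u a b"
    using assms test_fun_kernel_setting[of u \<nu>] by auto
  have "(2 + 3 / (\<nu> - 3/2))\<^sup>2 \<le> (2 + 3 / \<delta>)\<^sup>2"
    using assms \<nu> by (intro power_mono add_left_mono divide_left_mono) auto
  then have "ennreal ((2 + 3 / (\<nu> - 3/2))\<^sup>2) * L2sq u \<le> ennreal ((2 + 3 / \<delta>)\<^sup>2) * L2sq u"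
    by (intro mult_right_mono ennreal_leI) auto
  then show "(\<forall>x>0. opT \<nu> u differentiable at x \<and> euler (opT \<nu> u) differentiable at x) \<and>
           L2sq (opT \<nu> u) \<le> ennreal ((inverse (\<nu>\<^sup>2 - 9/4))\<^sup>2) * L2sq u \<and>
           L2sq (euler (opT \<nu> u)) \<le> ennreal ((inverse (\<nu> - 3/2))\<^sup>2) * L2sq u \<and>
           L2sq (euler (euler (opT \<nu> u))) \<le> ennreal ((2 + 3 / \<delta>)\<^sup>2) * L2sq u"
    using kernel_setting.opT_estimates[OF ks] order_trans by blast
qed (use assms in \<open>simp add: add_pos_pos\<close>)

end
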